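(* Let $f:\mathbb{R}^2\to\mathbb{R}$ be a smooth Morse function, let $G=\|\nabla f\|$ be its gradient magnitude field, and let $\delta>0$. Let $X$ be a bounded, simply connected, connected component of the $\delta$-sublevel set $G^{-1}(-\infty,\delta]$, regarded as a region of the plane: assume $\|\nabla f\|\le\delta$ on $\overline{X}$, $\|\nabla f\|=\delta$ on the boundary $\mathrm{Bd}(X)$, and $\mathrm{Bd}(X)$ is a Jordan curve. Suppose the degree of $X$ is non-zero. Then there exists a continuous vector field $\widetilde{V}:\overline{X}\to\mathbb{R}^2$ such that: (i) $\widetilde V$ is a $2\delta$-perturbation of $\nabla f|_{\overline{X}}$, i.e. $\sup_{p\in\overline{X}}\|\widetilde V(p)-\nabla f(p)\|\le 2\delta$; (ii) $\widetilde V|_{\mathrm{Bd}(X)}=\nabla f|_{\mathrm{Bd}(X)}$; (iii) $\widetilde V$ has exactly one zero (singularity) in $\overline{X}$.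
   Context: The degree of $X$ is the sum of the Poincaré indices of the zeros of the gradient vector field $\nabla f$ contained in $X$ (the zeros of $\nabla f$ are the critical points of $f$; they are isolated since $f$ is Morse; sources and sinks have index $+1$, saddles have index $-1$). A singularity of a vector field is a point where it vanishes. For vector fields $V,\widetilde V$ on a common domain, $\widetilde V$ is called a $\delta$-perturbation of $V$ if $\sup_p\|V(p)-\widetilde V(p)\|\le\delta$. *)

theory Defs
  imports "HOL-Analysis.Analysis" "HOL-Complex_Analysis.Complex_Analysis"
begin

text \<open>The plane is modelled as \<open>real^2\<close>. Identification with the complex plane
  (used only to express winding numbers).\<close>

definition to_c :: "real^2 \<Rightarrow> complex" where
  "to_c v = Complex (v $ 1) (v $ 2)"

definition from_c :: "complex \<Rightarrow> real^2" where
  "from_c z = vector [Re z, Im z]"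

text \<open>Smooth (C-infinity) functions on the plane: all iterated partial derivatives
  exist everywhere and are continuous.\<close>

definition smooth2 :: "(real^2 \<Rightarrow> real) \<Rightarrow> bool" where
  "smooth2 f \<longleftrightarrow> (\<exists>S. f \<in> S \<and> (\<forall>g\<in>S. continuous_on UNIV g \<and>
      (\<forall>i::2. \<exists>h\<in>S. \<forall>x. ((\<lambda>t. g (x + t *\<^sub>R axis i 1)) has_real_derivative h x) (at 0))))"

definition grad :: "(real^2 \<Rightarrow> real) \<Rightarrow> real^2 \<Rightarrow> real^2" where
  "grad f p = (SOME g. (f has_derivative (\<lambda>v. g \<bullet> v)) (at p))"

definition morse2 :: "(real^2 \<Rightarrow> real) \<Rightarrow> bool" where
  "morse2 f \<longleftrightarrow> smooth2 f \<and>
     (\<forall>p. grad f p = 0 \<longrightarrow> (\<exists>H. (grad f has_derivative H) (at p) \<and> inj H))"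

definition poincare_index :: "(real^2 \<Rightarrow> real^2) \<Rightarrow> real^2 \<Rightarrow> complex" where
  "poincare_index V p = (THE k. eventually
      (\<lambda>r. winding_number (\<lambda>t. to_c (V (from_c (circlepath (to_c p) r t)))) 0 = k)
      (at_right 0))"

definition degree_region :: "(real^2 \<Rightarrow> real) \<Rightarrow> (real^2) set \<Rightarrow> complex" where
  "degree_region f X = (\<Sum>p\<in>{p\<in>X. grad f p = 0}. poincare_index (grad f) p)"

definition jordan_curve :: "(real^2) set \<Rightarrow> bool" where
  "jordan_curve C \<longleftrightarrow> (\<exists>g. simple_path g \<and> pathfinish g = pathstart g \<and> path_image g = C)"

end

theory Submission
  imports Defs
begin

text \<open>The gradient of a smooth function is continuous, and on the Jordan curve \<open>Bd(X)\<close> it takes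
  values in the circle of radius \<open>\<delta>\<close>. A non-zero degree provides a critical point \<open>p\<close> in \<open>X\<close>;
  it lies in the bounded component of the complement of \<open>Bd(X)\<close>, which by the Jordan curve
  theorem is the only one. Borsuk's extension theorem therefore extends \<open>\<nabla>f|Bd(X)\<close> to a map
  from the plane minus \<open>p\<close> into that circle. Damping it by \<open>min 1 (|q - p| / dist(p, Bd(X)))\<close>
  gives a continuous field of norm at most \<open>\<delta>\<close> that vanishes only at \<open>p\<close> and agrees with
  \<open>\<nabla>f\<close> on \<open>Bd(X)\<close>; the triangle inequality then bounds its distance to \<open>\<nabla>f\<close> by \<open>2\<delta>\<close>.\<close>

lemma real_affine_approx_from_derivative:
  fixes \<phi> \<phi>' :: "real \<Rightarrow> real"
  assumes der: "\<And>t. (\<phi> has_real_derivative \<phi>' t) (at t)"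
    and close: "\<And>t. \<bar>t\<bar> \<le> \<bar>s\<bar> \<Longrightarrow> \<bar>\<phi>' t - c\<bar> \<le> e"
  shows "\<bar>\<phi> s - \<phi> 0 - c * s\<bar> \<le> e * \<bar>s\<bar>"
proof -
  have deriv: "((\<lambda>t. \<phi> t - c * t) has_real_derivative \<phi>' t - c) (at t)" for t
    using DERIV_diff[OF der DERIV_cmult_Id] by simp
  have "\<bar>t\<bar> \<le> \<bar>s\<bar>" if "t \<in> closed_segment 0 s" for t
    using that by (cases "0 \<le> s") (auto simp: closed_segment_eq_real_ivl)
  then have "norm ((\<phi> s - c * s) - (\<phi> 0 - c * 0)) \<le> e * norm (s - 0)"
    by (intro field_differentiable_bound[OF convex_closed_segment, of 0 s _ "\<lambda>t. \<phi>' t - c"]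
        has_field_derivative_at_within[OF deriv]) (auto intro!: close)
  then show ?thesis by simp
qed

lemma partial_increment_bound:
  fixes f :: "'a::real_normed_vector \<Rightarrow> real"
  assumes partial: "\<And>x. ((\<lambda>t. f (x + t *\<^sub>R u)) has_real_derivative d x) (at 0)"
    and close: "\<And>t. \<bar>t\<bar> \<le> \<bar>s\<bar> \<Longrightarrow> \<bar>d (y + t *\<^sub>R u) - c\<bar> \<le> e"
  shows "\<bar>f (y + s *\<^sub>R u) - f y - c * s\<bar> \<le> e * \<bar>s\<bar>"
proof -
  have "((\<lambda>t. f (y + t *\<^sub>R u)) has_real_derivative d (y + t0 *\<^sub>R u)) (at t0)" for t0
  proof -
    have "((\<lambda>t. f (y + (t + t0) *\<^sub>R u)) has_real_derivative d (y + t0 *\<^sub>R u)) (at 0)"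
      using partial[of "y + t0 *\<^sub>R u"] by (simp add: scaleR_add_left add_ac)
    then show ?thesis
      using DERIV_shift[of "\<lambda>t. f (y + t *\<^sub>R u)" _ 0 t0] by simp
  qed
  from real_affine_approx_from_derivative[OF this close] show ?thesis by simp
qed

lemma partials_increment_bound_2:
  fixes f :: "real^2 \<Rightarrow> real"
  assumes partial1: "\<And>x. ((\<lambda>t. f (x + t *\<^sub>R axis 1 1)) has_real_derivative d1 x) (at 0)"
    and partial2: "\<And>x. ((\<lambda>t. f (x + t *\<^sub>R axis 2 1)) has_real_derivative d2 x) (at 0)"
    and close1: "\<And>z. dist z x < r \<Longrightarrow> \<bar>d1 z - d1 x\<bar> \<le> e"
    and close2: "\<And>z. dist z x < r \<Longrightarrow> \<bar>d2 z - d2 x\<bar> \<le> e"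
    and y: "norm (y - x) < r / 2"
  shows "\<bar>f y - f x - (d1 x * (y - x) $ 1 + d2 x * (y - x) $ 2)\<bar> \<le> 2 * e * norm (y - x)"
proof -
  define a b where "a = (y - x) $ 1" and "b = (y - x) $ 2"
  have a: "\<bar>a\<bar> \<le> norm (y - x)" and b: "\<bar>b\<bar> \<le> norm (y - x)"
    unfolding a_def b_def by (rule component_le_norm_cart)+
  have "0 \<le> e"
    using close1[of x] y norm_ge_zero[of "y - x"] by simp
  have y_eq: "y = (x + b *\<^sub>R axis 2 1) + a *\<^sub>R axis 1 1"
    unfolding a_def b_def by (simp add: vec_eq_iff forall_2 axis_def)
  have step1: "\<bar>f y - f (x + b *\<^sub>R axis 2 1) - d1 x * a\<bar> \<le> e * \<bar>a\<bar>"
    unfolding y_eq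
  proof (rule partial_increment_bound[OF partial1])
    fix t assume "\<bar>t\<bar> \<le> \<bar>a\<bar>"
    have "dist (x + b *\<^sub>R axis 2 1 + t *\<^sub>R axis 1 1) x \<le> \<bar>b\<bar> + \<bar>t\<bar>"
      using norm_triangle_ineq[of "b *\<^sub>R axis 2 1 :: real^2" "t *\<^sub>R axis 1 1"]
      by (simp add: dist_norm)
    also have "\<dots> < r"
      using \<open>\<bar>t\<bar> \<le> \<bar>a\<bar>\<close> a b y by simp
    finally show "\<bar>d1 (x + b *\<^sub>R axis 2 1 + t *\<^sub>R axis 1 1) - d1 x\<bar> \<le> e"
      by (rule close1)
  qed
  have step2: "\<bar>f (x + b *\<^sub>R axis 2 1) - f x - d2 x * b\<bar> \<le> e * \<bar>b\<bar>"
  proof (rule partial_increment_bound[OF partial2, of b x, simplified])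
    fix t assume "\<bar>t\<bar> \<le> \<bar>b\<bar>"
    then have "dist (x + t *\<^sub>R axis 2 1) x < r"
      using b y norm_ge_zero[of "y - x"] unfolding dist_norm by simp
    then show "\<bar>d2 (x + t *\<^sub>R axis 2 1) - d2 x\<bar> \<le> e"
      by (rule close2)
  qed
  have "\<bar>f y - f x - (d1 x * a + d2 x * b)\<bar> \<le> e * \<bar>a\<bar> + e * \<bar>b\<bar>"
    using step1 step2 by linarith
  also have "\<dots> \<le> 2 * e * norm (y - x)"
    using mult_left_mono[OF add_mono[OF a b] \<open>0 \<le> e\<close>] by (simp add: algebra_simps)
  finally show ?thesis
    by (simp add: a_def b_def)
qed

lemma has_derivative_of_continuous_partials_2:
  fixes f :: "real^2 \<Rightarrow> real"
  assumes cont1: "continuous_on UNIV d1" and cont2: "continuous_on UNIV d2"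
    and partial1: "\<And>x. ((\<lambda>t. f (x + t *\<^sub>R axis 1 1)) has_real_derivative d1 x) (at 0)"
    and partial2: "\<And>x. ((\<lambda>t. f (x + t *\<^sub>R axis 2 1)) has_real_derivative d2 x) (at 0)"
  shows "(f has_derivative (\<lambda>v. d1 x * v $ 1 + d2 x * v $ 2)) (at x)"
  unfolding has_derivative_at_alt
proof (intro conjI allI impI)
  show "bounded_linear (\<lambda>v::real^2. d1 x * v $ 1 + d2 x * v $ 2)"
    by (intro bounded_linear_add bounded_linear_const_mult bounded_linear_vec_nth)
  fix e :: real assume "e > 0"
  have "\<exists>r>0. \<forall>z. dist z x < r \<longrightarrow> \<bar>d z - d x\<bar> \<le> e/2"
    if "continuous_on UNIV d" for d :: "real^2 \<Rightarrow> real"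
  proof -
    have "\<exists>r>0. \<forall>z\<in>UNIV. dist z x < r \<longrightarrow> dist (d z) (d x) < e/2"
      using that[unfolded continuous_on_iff, rule_format, of x "e/2"] \<open>e > 0\<close> by simp
    then show ?thesis
      unfolding dist_real_def by (meson UNIV_I less_imp_le)
  qed
  then obtain r1 r2 where "r1 > 0" and r1: "\<And>z. dist z x < r1 \<Longrightarrow> \<bar>d1 z - d1 x\<bar> \<le> e/2"
    and "r2 > 0" and r2: "\<And>z. dist z x < r2 \<Longrightarrow> \<bar>d2 z - d2 x\<bar> \<le> e/2"
    by (metis cont1 cont2)
  show "\<exists>r>0. \<forall>y. norm (y - x) < r \<longrightarrow>
      norm (f y - f x - (d1 x * (y - x) $ 1 + d2 x * (y - x) $ 2)) \<le> e * norm (y - x)"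
  proof (intro exI[of _ "min r1 r2 / 2"] conjI allI impI)
    show "min r1 r2 / 2 > 0"
      using \<open>r1 > 0\<close> \<open>r2 > 0\<close> by simp
    show "norm (f y - f x - (d1 x * (y - x) $ 1 + d2 x * (y - x) $ 2)) \<le> e * norm (y - x)"
      if "norm (y - x) < min r1 r2 / 2" for y
      using partials_increment_bound_2[OF partial1 partial2 _ _ that, of "e/2"] r1 r2 by simp
  qed
qed

lemma grad_eqI:
  assumes "(f has_derivative (\<lambda>v. g \<bullet> v)) (at p)"
  shows "grad f p = g"
proof -
  have "(f has_derivative (\<lambda>v. grad f p \<bullet> v)) (at p)"
    unfolding grad_def by (rule someI[of _ g]) (rule assms)
  then have "(\<lambda>v. grad f p \<bullet> v) = (\<lambda>v. g \<bullet> v)"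
    using assms by (rule has_derivative_unique)
  then show ?thesis
    by (simp add: fun_eq_iff vector_eq_rdot)
qed

lemma continuous_on_grad:
  assumes "smooth2 f"
  shows "continuous_on UNIV (grad f)"
proof -
  obtain S where "f \<in> S" and S: "\<And>g. g \<in> S \<Longrightarrow> continuous_on UNIV g \<and>
      (\<forall>i::2. \<exists>h\<in>S. \<forall>x. ((\<lambda>t. g (x + t *\<^sub>R axis i 1)) has_real_derivative h x) (at 0))"
    using assms unfolding smooth2_def by blast
  have partials: "\<exists>h\<in>S. \<forall>x. ((\<lambda>t. f (x + t *\<^sub>R axis i 1)) has_real_derivative h x) (at 0)"
    for i :: 2
    using S[OF \<open>f \<in> S\<close>] by blast
  obtain d1 where "d1 \<in> S"
    and partial1: "\<And>x. ((\<lambda>t. f (x + t *\<^sub>R axis 1 1)) has_real_derivative d1 x) (at 0)"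
    using partials[of 1] by blast
  obtain d2 where "d2 \<in> S"
    and partial2: "\<And>x. ((\<lambda>t. f (x + t *\<^sub>R axis 2 1)) has_real_derivative d2 x) (at 0)"
    using partials[of 2] by blast
  have cont1: "continuous_on UNIV d1" and cont2: "continuous_on UNIV d2"
    using S[OF \<open>d1 \<in> S\<close>] S[OF \<open>d2 \<in> S\<close>] by blast+
  have "grad f = (\<lambda>x. d1 x *\<^sub>R axis 1 1 + d2 x *\<^sub>R axis 2 1)"
  proof (rule ext, rule grad_eqI)
    fix x
    show "(f has_derivative (\<lambda>v. (d1 x *\<^sub>R axis 1 1 + d2 x *\<^sub>R axis 2 1) \<bullet> v)) (at x)"
      using has_derivative_of_continuous_partials_2[OF cont1 cont2 partial1 partial2]
      by (simp add: inner_add_left inner_axis')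
  qed
  then show ?thesis
    by (simp add: continuous_on_add continuous_on_scaleR cont1 cont2)
qed

lemma from_to_c [simp]: "from_c (to_c v) = v"
  by (simp add: from_c_def to_c_def vec_eq_iff forall_2)

lemma to_from_c [simp]: "to_c (from_c z) = z"
  by (simp add: from_c_def to_c_def complex_eq_iff)

lemma bij_to_c: "bij to_c"
  by (metis bijI' from_to_c to_from_c)

lemma linear_to_c: "linear to_c"
  by (rule linearI) (simp_all add: to_c_def complex_eq_iff)

lemma linear_from_c: "linear from_c"
  by (rule linearI) (simp_all add: from_c_def vec_eq_iff forall_2)

lemma homeomorphism_Compl_to_c: "homeomorphism (- J) (- (to_c ` J)) to_c from_c"
proof (rule homeomorphismI)
  show "continuous_on (- J) to_c" "continuous_on (- (to_c ` J)) from_c"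
    using linear_to_c linear_from_c by (simp_all add: linear_continuous_on linear_conv_bounded_linear)
  show "to_c ` (- J) \<subseteq> - (to_c ` J)"
    using bij_image_Compl_eq[OF bij_to_c] by simp
  show "from_c ` (- (to_c ` J)) \<subseteq> - J"
    by (auto simp: image_iff) (metis to_from_c)
qed simp_all

lemma jordan_curve_bounded_component_eq_inside:
  assumes "jordan_curve J" and C: "C \<in> components (- J)" "bounded C"
  shows "to_c ` C = inside (to_c ` J)"
proof -
  obtain \<gamma> where \<gamma>: "simple_path \<gamma>" "pathfinish \<gamma> = pathstart \<gamma>" "path_image \<gamma> = J"
    using assms(1) unfolding jordan_curve_def by blast
  have "simple_path (to_c \<circ> \<gamma>)" "pathfinish (to_c \<circ> \<gamma>) = pathstart (to_c \<circ> \<gamma>)"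
    using \<gamma> simple_path_linear_image_eq[OF linear_to_c bij_is_inj[OF bij_to_c]]
    by (simp_all add: pathfinish_compose pathstart_compose)
  moreover have "path_image (to_c \<circ> \<gamma>) = to_c ` J"
    using \<gamma>(3) by (simp add: path_image_compose)
  ultimately have inside: "inside (to_c ` J) \<in> components (- (to_c ` J))"
    using Jordan_inside_outside inside_in_components by metis
  obtain x where "x \<in> - J" and C_eq: "C = connected_component_set (- J) x"
    using C(1) unfolding components_iff by blast
  then have image_C: "to_c ` C = connected_component_set (- (to_c ` J)) (to_c x)"
    using connected_component_set_homeomorphism[OF homeomorphism_Compl_to_c] by metis
  have x_in: "to_c x \<in> - (to_c ` J)"
    using \<open>x \<in> - J\<close> bij_image_Compl_eq[OF bij_to_c, of J] by auto
  have "bounded (to_c ` C)"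
    using C(2) linear_to_c bounded_linear_image linear_conv_bounded_linear by blast
  then have "to_c x \<in> inside (to_c ` J)"
    using x_in image_C unfolding inside_def by auto
  moreover have "to_c x \<in> to_c ` C"
    using x_in image_C by simp
  moreover have "to_c ` C \<in> components (- (to_c ` J))"
    using x_in image_C componentsI by metis
  ultimately show ?thesis
    using components_eq[OF _ inside] by blast
qed

lemma connected_component_Compl_frontier_subset:
  assumes "p \<in> X"
  shows "connected_component_set (- frontier X) p \<subseteq> X"
proof (rule ccontr)
  let ?C = "connected_component_set (- frontier X) p"
  assume "\<not> ?C \<subseteq> X"
  then have "p \<in> - frontier X"
    using connected_component_eq_empty[of "- frontier X" p] by auto
  then have "p \<in> ?C \<inter> X"
    using assms by simp
  then have "?C \<inter> X \<noteq> {}"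
    by blast
  moreover have "?C - X \<noteq> {}"
    using \<open>\<not> ?C \<subseteq> X\<close> by blast
  ultimately have "?C \<inter> frontier X \<noteq> {}"
    by (rule connected_Int_frontier[OF connected_connected_component])
  moreover have "?C \<subseteq> - frontier X"
    by (rule connected_component_subset)
  ultimately show False
    by blast
qed

lemma continuous_cutoff_vanishing_at:
  fixes g :: "'a::metric_space \<Rightarrow> 'b::real_normed_vector"
  assumes cont: "continuous_on (- {p}) g" and norm: "\<And>q. q \<noteq> p \<Longrightarrow> norm (g q) = r"
    and "r > 0" "\<epsilon> > 0"
  obtains V where "continuous_on UNIV V" "\<And>q. norm (V q) \<le> r" "\<And>q. V q = 0 \<longleftrightarrow> q = p"
    "\<And>q. \<epsilon> \<le> dist q p \<Longrightarrow> V q = g q"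
proof
  define \<psi> where "\<psi> q = min 1 (dist q p / \<epsilon>)" for q
  let ?V = "\<lambda>q. \<psi> q *\<^sub>R g q"
  have \<psi>_pos: "\<psi> q > 0" if "q \<noteq> p" for q
    using that \<open>\<epsilon> > 0\<close> by (simp add: \<psi>_def)
  have norm_V_eq: "norm (?V q) = \<psi> q * r" for q
  proof (cases "q = p")
    case True
    then show ?thesis by (simp add: \<psi>_def)
  next
    case False
    then show ?thesis using \<psi>_pos[OF False] norm[OF False] by simp
  qed
  have norm_V_le: "norm (?V q) \<le> dist q p / \<epsilon> * r" for q
    unfolding norm_V_eq using \<open>r > 0\<close> by (intro mult_right_mono) (auto simp: \<psi>_def)
  show "norm (?V q) \<le> r" for q
    unfolding norm_V_eq using \<open>r > 0\<close> by (simp add: \<psi>_def)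
  show "?V q = 0 \<longleftrightarrow> q = p" for q
  proof -
    have "?V q = 0 \<longleftrightarrow> \<psi> q = 0"
      using norm_V_eq[of q] \<open>r > 0\<close> by (metis mult_eq_0_iff norm_eq_zero order_less_irrefl)
    also have "\<dots> \<longleftrightarrow> q = p"
      using \<psi>_pos[of q] by (cases "q = p") (auto simp: \<psi>_def)
    finally show ?thesis .
  qed
  show "?V q = g q" if "\<epsilon> \<le> dist q p" for q
    using that \<open>\<epsilon> > 0\<close> by (simp add: \<psi>_def)
  have "isCont ?V q" for q
  proof (cases "q = p")
    case True
    have "((\<lambda>q. dist q p) \<longlongrightarrow> 0) (at p)"
      using tendsto_dist_iff[THEN iffD1, OF tendsto_ident_at] .
    then have "((\<lambda>q. dist q p / \<epsilon> * r) \<longlongrightarrow> 0) (at p)"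
      by (intro tendsto_mult_left_zero tendsto_divide_zero)
    then have "(?V \<longlongrightarrow> 0) (at p)"
      by (rule Lim_null_comparison[OF always_eventually, rotated]) (use norm_V_le in blast)
    then show ?thesis
      using True by (simp add: isCont_def \<psi>_def)
  next
    case False
    have "continuous_on (- {p}) ?V"
      unfolding \<psi>_def by (intro continuous_intros cont) (use \<open>\<epsilon> > 0\<close> in auto)
    then show ?thesis
      using False continuous_on_eq_continuous_at[of "- {p}" ?V] open_Compl[OF closed_singleton]
      by blast
  qed
  then show "continuous_on UNIV ?V"
    by (simp add: continuous_at_imp_continuous_on)
qed

lemma jordan_curve_bounded_component_unique:
  assumes "jordan_curve J"
    and "C \<in> components (- J)" "bounded C" and "D \<in> components (- J)" "bounded D"
  shows "C = D"
proof -
  have "to_c ` C = to_c ` D"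
    using jordan_curve_bounded_component_eq_inside[OF assms(1-3)]
      jordan_curve_bounded_component_eq_inside[OF assms(1,4,5)] by simp
  then show ?thesis
    by (rule inj_image_eq_iff[OF bij_is_inj[OF bij_to_c], THEN iffD1])
qed

lemma jordan_curve_frontier_bounded_component:
  assumes jordan: "jordan_curve (frontier X)" and "bounded X" "p \<in> X" "p \<notin> frontier X"
    and C: "C \<in> components (- frontier X)" "bounded C"
  shows "p \<in> C"
proof -
  let ?P = "connected_component_set (- frontier X) p"
  have "p \<in> - frontier X"
    using assms(4) by blast
  then have "?P \<in> components (- frontier X)"
    by (rule componentsI)
  moreover have "bounded ?P"
    using bounded_subset[OF assms(2) connected_component_Compl_frontier_subset[OF assms(3)]] .
  ultimately have "C = ?P"
    using jordan_curve_bounded_component_unique[OF jordan C] by blast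
  then show ?thesis
    using connected_component_refl[OF \<open>p \<in> - frontier X\<close>] by blast
qed

lemma degree_region_nonzero_obtains_critical_point:
  assumes "degree_region f X \<noteq> 0"
  obtains p where "p \<in> X" "grad f p = 0"
proof -
  have "{p \<in> X. grad f p = 0} \<noteq> {}"
  proof
    assume "{p \<in> X. grad f p = 0} = {}"
    then have "degree_region f X = 0"
      unfolding degree_region_def by (simp only: sum.empty)
    with assms show False
      by contradiction
  qed
  then show ?thesis
    using that by blast
qed

lemma extend_from_jordan_frontier_single_zero:
  fixes h :: "real^2 \<Rightarrow> real^2"
  assumes jordan: "jordan_curve (frontier X)" and "bounded X" "p \<in> X" "p \<notin> frontier X"
    and cont: "continuous_on (frontier X) h" and norm: "\<And>q. q \<in> frontier X \<Longrightarrow> norm (h q) = r"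
    and "r > 0"
  obtains V where "continuous_on UNIV V" "\<And>q. norm (V q) \<le> r" "\<And>q. V q = 0 \<longleftrightarrow> q = p"
    "\<And>q. q \<in> frontier X \<Longrightarrow> V q = h q"
proof -
  obtain \<gamma> where "simple_path \<gamma>" "path_image \<gamma> = frontier X"
    using jordan unfolding jordan_curve_def by blast
  then have compact: "compact (frontier X)" and nonempty: "frontier X \<noteq> {}"
    using compact_simple_path_image[of \<gamma>] path_image_nonempty[of \<gamma>] by simp_all
  have maps: "h \<in> frontier X \<rightarrow> sphere 0 r"
    using norm by simp
  have components: "C \<inter> {p} \<noteq> {}" if "C \<in> components (- frontier X)" "bounded C" for C
    using jordan_curve_frontier_bounded_component[OF jordan assms(2-4) that] by blast
  obtain K g where "finite K" "K \<subseteq> {p}" "disjnt K (frontier X)" "continuous_on (- K) g"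
    "g \<in> - K \<rightarrow> sphere 0 r" "\<And>q. q \<in> frontier X \<Longrightarrow> g q = h q"
    using extend_map_UNIV_to_sphere_cofinite[OF order_refl less_imp_le[OF \<open>r > 0\<close>]
        compact cont maps components] by blast
  note K = this
  have cont_g: "continuous_on (- {p}) g"
    by (rule continuous_on_subset[OF K(4)]) (use K(2) in blast)
  have norm_g: "norm (g q) = r" if "q \<noteq> p" for q
    using K(2,5) that by auto
  have "infdist p (frontier X) > 0"
    using infdist_pos_not_in_closed[OF compact_imp_closed[OF compact] nonempty assms(4)] .
  then obtain V where cont_V: "continuous_on UNIV V" and norm_V: "\<And>q. norm (V q) \<le> r"
    and zero_V: "\<And>q. V q = 0 \<longleftrightarrow> q = p" and V_eq: "\<And>q. infdist p (frontier X) \<le> dist q p \<Longrightarrow> V q = g q"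
    using continuous_cutoff_vanishing_at[OF cont_g norm_g \<open>r > 0\<close>] by blast
  have V_frontier: "V q = h q" if "q \<in> frontier X" for q
  proof -
    have "infdist p (frontier X) \<le> dist q p"
      using infdist_le[OF that, of p] by (simp add: dist_commute)
    then show ?thesis
      using V_eq K(6)[OF that] by simp
  qed
  show ?thesis
    using cont_V norm_V zero_V V_frontier by (rule that)
qed

theorem theorem3:
  fixes f :: "real^2 \<Rightarrow> real" and \<delta> :: real and X :: "(real^2) set"
  assumes "morse2 f"
    and "\<delta> > 0"
    and "X \<in> components {p. norm (grad f p) \<le> \<delta>}"
    and "bounded X"
    and "simply_connected X"
    and "\<forall>p\<in>closure X. norm (grad f p) \<le> \<delta>"
    and "\<forall>p\<in>frontier X. norm (grad f p) = \<delta>"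
    and "jordan_curve (frontier X)"
    and "degree_region f X \<noteq> 0"
  shows "\<exists>V :: real^2 \<Rightarrow> real^2. continuous_on (closure X) V
           \<and> (\<forall>p\<in>closure X. norm (V p - grad f p) \<le> 2 * \<delta>)
           \<and> (\<forall>p\<in>frontier X. V p = grad f p)
           \<and> (\<exists>!p. p \<in> closure X \<and> V p = 0)"
proof -
  have cont_grad: "continuous_on UNIV (grad f)"
    using assms(1) continuous_on_grad unfolding morse2_def by blast
  obtain p where "p \<in> X" and "grad f p = 0"
    using degree_region_nonzero_obtains_critical_point[OF assms(9)] .
  then have "p \<notin> frontier X"
    using assms(2,7) by auto
  have norm_frontier: "\<And>q. q \<in> frontier X \<Longrightarrow> norm (grad f q) = \<delta>"
    using assms(7) by blast
  obtain V where cont_V: "continuous_on UNIV V" and norm_V: "\<And>q. norm (V q) \<le> \<delta>"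
    and zero_V: "\<And>q. V q = 0 \<longleftrightarrow> q = p" and V_frontier: "\<And>q. q \<in> frontier X \<Longrightarrow> V q = grad f q"
    using extend_from_jordan_frontier_single_zero[OF assms(8,4) \<open>p \<in> X\<close> \<open>p \<notin> frontier X\<close>
        continuous_on_subset[OF cont_grad subset_UNIV] norm_frontier assms(2)] by blast
  show ?thesis
  proof (intro exI[of _ V] conjI ballI ex1I[of _ p])
    show "continuous_on (closure X) V"
      by (rule continuous_on_subset[OF cont_V subset_UNIV])
    show "norm (V q - grad f q) \<le> 2 * \<delta>" if "q \<in> closure X" for q
      using norm_triangle_ineq4[of "V q" "grad f q"] norm_V[of q] bspec[OF assms(6) that] by linarith
    show "V q = grad f q" if "q \<in> frontier X" for q
      using that by (rule V_frontier)
    show "p \<in> closure X"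
      using \<open>p \<in> X\<close> closure_subset by blast
    show "V p = 0"
      using zero_V by blast
    show "q = p" if "q \<in> closure X \<and> V q = 0" for q
      using that zero_V by blast
  qed
qed

end
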